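(* Consider a Fragile multi-CPR Game $G^{(2)}$ with $n\ge1$ players and $m\ge1$ CPRs satisfying the Assumption below, with constraint policies $\vartheta_i$ as defined below, and assume $m\le n$. Let $\mathcal{N}(G^{(2)})\subset\mathcal{C}_n\subset\mathbb{R}^{nm}$ be the set of all Generalized Nash equilibria of $G^{(2)}$. Then the $(n\cdot m)$-dimensional Lebesgue measure of $\mathcal{N}(G^{(2)})$ is zero.
   Context: Let $[k]=\{1,\dots,k\}$. Let $C_m=\{(x_1,\dots,x_m)\in[0,1]^m:\sum_{j}x_j\le1\}$, $\mathcal{C}_n=\prod_{i\in[n]}C_m$, $\mathcal{C}_{-i}=\prod_{[n]\setminus\{i\}}C_m$. A strategy profile is $\mathbf{x}=(\mathbf{x}_1,\dots,\mathbf{x}_n)\in\mathcal{C}_n$, $\mathbf{x}_i=(x_{i1},\dots,x_{im})$; write $\mathbf{x}=(\mathbf{x}_i,\mathbf{x}_{-i})$. Put $\mathbf{x}_T^{(j)}=\sum_{i}x_{ij}$, $\mathbf{x}_T^{j|i}=\sum_{\ell\ne i}x_{\ell j}$. Each CPR $j$ has a return rate $\mathcal{R}_j(t)>1$ and failure probability $p_j(t)\in[0,1]$; each player $i$ has parameters $a_i,k_i$. Effective rate: $\mathcal{F}_{ij}(t)=(\mathcal{R}_j(t)-1)^{a_i}(1-p_j(t))-k_ip_j(t)$; utility: $\mathcal{V}_i(\mathbf{x}_i;\mathbf{x}_{-i})=\sum_j x_{ij}^{a_i}\mathcal{F}_{ij}(\mathbf{x}_T^{(j)})$. Assumption: (1)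 $p_j(0)=0$, $p_j(t)=1$ for $t\ge1$; (2) $a_i\in(0,1]$, $k_i>0$; (3) each $\mathcal{F}_{ij}$ (continuous on $[0,1]$) has strictly negative first and second derivatives on $(0,1)$. Let $\omega_{ij}\in(0,1)$ be the unique zero of $\mathcal{F}_{ij}$ in $(0,1)$. Active CPRs: $A(\mathbf{x}_{-i})=\{j:\mathbf{x}_T^{j|i}<\omega_{ij}\}$. Constraint policy: $\vartheta_i(\mathbf{x}_{-i})=C_m\cap\big(\prod_{j\in A(\mathbf{x}_{-i})}[0,\omega_{ij}-\mathbf{x}_T^{j|i}]\times\prod_{j\notin A(\mathbf{x}_{-i})}\{0\}\big)$. A Generalized Nash equilibrium is $\mathbf{x}^*\in\mathcal{C}_n$ with, for all $i$, $\mathbf{x}^*_i\in\vartheta_i(\mathbf{x}^*_{-i})$ and $\mathcal{V}_i(\mathbf{x}^*_i;\mathbf{x}^*_{-i})\ge\mathcal{V}_i(\mathbf{y};\mathbf{x}^*_{-i})$ for all $\mathbf{y}\in\vartheta_i(\mathbf{x}^*_{-i})$. *)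

theory Defs
  imports "HOL-Analysis.Analysis"
begin

text \<open>Players are indexed by a finite type 'n (n = CARD('n) >= 1), CPRs by a
finite type 'm (m = CARD('m) >= 1). A strategy profile is a point of
real^'m^'n, i.e. of R^(n m); x$i$j is the investment of player i in CPR j.\<close>

definition simplexC :: "(real^'m) set" where
  "simplexC = {v. (\<forall>j. 0 \<le> v$j \<and> v$j \<le> 1) \<and> (\<Sum>j\<in>UNIV. v$j) \<le> 1}"

definition profiles :: "(real^'m^'n) set" where
  "profiles = {x. \<forall>i. x$i \<in> simplexC}"

definition total :: "real^'m^'n \<Rightarrow> 'm \<Rightarrow> real" where
  "total x j = (\<Sum>i\<in>UNIV. x$i$j)"

definition total_except :: "real^'m^'n \<Rightarrow> 'n \<Rightarrow> 'm \<Rightarrow> real" where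
  "total_except x i j = (\<Sum>l\<in>UNIV - {i}. x$l$j)"

definition effrate ::
  "('m \<Rightarrow> real \<Rightarrow> real) \<Rightarrow> ('m \<Rightarrow> real \<Rightarrow> real) \<Rightarrow> ('n \<Rightarrow> real) \<Rightarrow> ('n \<Rightarrow> real)
   \<Rightarrow> 'n \<Rightarrow> 'm \<Rightarrow> real \<Rightarrow> real" where
  "effrate R p a k i j t = (R j t - 1) powr (a i) * (1 - p j t) - k i * p j t"

definition utility ::
  "('m \<Rightarrow> real \<Rightarrow> real) \<Rightarrow> ('m \<Rightarrow> real \<Rightarrow> real) \<Rightarrow> ('n \<Rightarrow> real) \<Rightarrow> ('n \<Rightarrow> real)
   \<Rightarrow> 'n \<Rightarrow> real^'m \<Rightarrow> real^'m^'n \<Rightarrow> real" where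
  "utility R p a k i y x =
     (\<Sum>j\<in>UNIV. (y$j) powr (a i) * effrate R p a k i j (y$j + total_except x i j))"

definition omega ::
  "('m \<Rightarrow> real \<Rightarrow> real) \<Rightarrow> ('m \<Rightarrow> real \<Rightarrow> real) \<Rightarrow> ('n \<Rightarrow> real) \<Rightarrow> ('n \<Rightarrow> real)
   \<Rightarrow> 'n \<Rightarrow> 'm \<Rightarrow> real" where
  "omega R p a k i j = (THE w. 0 < w \<and> w < 1 \<and> effrate R p a k i j w = 0)"

definition active ::
  "('m \<Rightarrow> real \<Rightarrow> real) \<Rightarrow> ('m \<Rightarrow> real \<Rightarrow> real) \<Rightarrow> ('n \<Rightarrow> real) \<Rightarrow> ('n \<Rightarrow> real)
   \<Rightarrow> 'n \<Rightarrow> real^'m^'n \<Rightarrow> 'm set" where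
  "active R p a k i x = {j. total_except x i j < omega R p a k i j}"

definition policy ::
  "('m \<Rightarrow> real \<Rightarrow> real) \<Rightarrow> ('m \<Rightarrow> real \<Rightarrow> real) \<Rightarrow> ('n \<Rightarrow> real) \<Rightarrow> ('n \<Rightarrow> real)
   \<Rightarrow> 'n \<Rightarrow> real^'m^'n \<Rightarrow> (real^'m) set" where
  "policy R p a k i x = simplexC \<inter>
     {y. \<forall>j. (j \<in> active R p a k i x \<longrightarrow>
                 0 \<le> y$j \<and> y$j \<le> omega R p a k i j - total_except x i j) \<and>
              (j \<notin> active R p a k i x \<longrightarrow> y$j = 0)}"

definition GNE ::
  "('m \<Rightarrow> real \<Rightarrow> real) \<Rightarrow> ('m \<Rightarrow> real \<Rightarrow> real) \<Rightarrow> ('n \<Rightarrow> real) \<Rightarrow> ('n \<Rightarrow> real)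
   \<Rightarrow> (real^'m^'n) set" where
  "GNE R p a k = {x \<in> profiles. \<forall>i. x$i \<in> policy R p a k i x \<and>
       (\<forall>y \<in> policy R p a k i x. utility R p a k i (x$i) x \<ge> utility R p a k i y x)}"

definition game_assumption ::
  "('m \<Rightarrow> real \<Rightarrow> real) \<Rightarrow> ('m \<Rightarrow> real \<Rightarrow> real) \<Rightarrow> ('n \<Rightarrow> real) \<Rightarrow> ('n \<Rightarrow> real) \<Rightarrow> bool" where
  "game_assumption R p a k \<longleftrightarrow>
     (\<forall>j. \<forall>t\<ge>0. R j t > 1 \<and> 0 \<le> p j t \<and> p j t \<le> 1) \<and>
     (\<forall>j. p j 0 = 0 \<and> (\<forall>t\<ge>1. p j t = 1)) \<and>
     (\<forall>i. 0 < a i \<and> a i \<le> 1 \<and> 0 < k i) \<and>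
     (\<forall>i j. continuous_on {0..1} (effrate R p a k i j) \<and>
        (\<exists>F1 F2. \<forall>t\<in>{0<..<1}.
            (effrate R p a k i j has_real_derivative F1 t) (at t) \<and> F1 t < 0 \<and>
            (F1 has_real_derivative F2 t) (at t) \<and> F2 t < 0))"

end

theory Submission
  imports Defs
begin

(* Fix any player i and CPR j. At an equilibrium x either x_ij = 0, or one of the two
   constraints of player i binds (total x j = omega_ij or sum_j' x_ij' = 1), or x_ij is an
   interior local maximiser of u \<mapsto> u^a_i F_ij(u + s), s the others' investment in j.
   The first three cases are hyperplanes; in the last, the first-order condition
   a_i F_ij(T) + x_ij F_ij'(T) = 0 (T = total x j) determines x_ij as a smooth function of T.
   With a second player l, shifting x_ij onto x_lj keeps T fixed, so this set is a
   differentiable image of the hyperplane z_ij = 0; with a single player T = x_ij and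
   t \<mapsto> a_i F_ij(t) + t F_ij'(t) is strictly decreasing, so x_ij takes at most one value. *)

lemma DERIV_neg_imp_inj_on:
  fixes f :: "real \<Rightarrow> real"
  assumes "\<And>t. a < t \<Longrightarrow> t < b \<Longrightarrow> \<exists>y. (f has_real_derivative y) (at t) \<and> y < 0"
  shows "inj_on f {a<..<b}"
proof (rule linorder_inj_onI')
  fix s t assume "s \<in> {a<..<b}" "t \<in> {a<..<b}" "s < t"
  then show "f s \<noteq> f t"
    using DERIV_neg_imp_decreasing[of s t f] assms by force
qed

lemma local_max_powr_mult_imp_first_order:
  fixes F :: "real \<Rightarrow> real"
  assumes u: "0 < u" and d: "0 < d"
    and max: "\<And>v. \<bar>u - v\<bar> < d \<Longrightarrow> v powr c * F (v + s) \<le> u powr c * F (u + s)"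
    and F': "(F has_real_derivative D) (at (u + s))"
  shows "c * F (u + s) + u * D = 0"
proof -
  have "((\<lambda>v. F (v + s)) has_real_derivative D) (at u)"
  proof -
    have "((\<lambda>v. v + s) has_real_derivative 1) (at u)"
      by (auto intro!: derivative_eq_intros)
    from DERIV_chain2[where g="\<lambda>v. v + s", OF F' this] show ?thesis
      by simp
  qed
  then have "((\<lambda>v. v powr c * F (v + s)) has_real_derivative
      c * u powr (c - 1) * F (u + s) + u powr c * D) (at u)"
    using u by (auto intro!: derivative_eq_intros)
  then have "c * u powr (c - 1) * F (u + s) + u powr c * D = 0"
    by (rule DERIV_local_max[OF _ d]) (use max in auto)
  moreover have "u powr (c - 1) = u powr c / u"
    using u by (simp add: powr_diff)
  ultimately have "u powr c * (c * F (u + s) + u * D) = 0"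
    using u by (simp add: field_simps)
  with u show ?thesis
    by simp
qed

lemma total_eq_inner: "total x j = (\<chi> _. axis j 1) \<bullet> x"
  by (simp add: inner_vec_def[of "\<chi> _. axis j 1"] inner_axis' total_def)

lemma total_eq_add_total_except: "total x j = x$i$j + total_except x i j"
  unfolding total_def total_except_def by (simp add: sum.remove[of UNIV i])

lemma negligible_entry_level_set:
  "negligible {x::real^'m::finite^'n::finite. x$i$j = c}"
proof -
  have "negligible {x::real^'m^'n. axis i (axis j 1) \<bullet> x = c}"
    by (intro negligible_hyperplane) (simp add: axis_eq_0_iff)
  then show ?thesis
    by (simp add: inner_axis')
qed

lemma negligible_row_sum_level_set:
  "negligible {x::real^'m::finite^'n::finite. (\<Sum>j\<in>UNIV. x$i$j) = c}"
proof -
  have "negligible {x::real^'m^'n. axis i (\<chi> _. 1) \<bullet> x = c}"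
    by (intro negligible_hyperplane) (auto simp: axis_def vec_eq_iff)
  moreover have "axis i (\<chi> _. 1) \<bullet> x = (\<Sum>j\<in>UNIV. x$i$j)" for x :: "real^'m^'n"
    by (simp add: inner_axis' inner_vec_def[of "\<chi> _. 1"])
  ultimately show ?thesis
    by simp
qed

lemma negligible_total_level_set:
  "negligible {x::real^'m::finite^'n::finite. total x j = c}"
proof -
  have "negligible {x::real^'m^'n. (\<chi> _. axis j 1) \<bullet> x = c}"
    by (intro negligible_hyperplane) (auto simp: axis_def vec_eq_iff)
  then show ?thesis
    by (simp add: total_eq_inner)
qed

lemma game_assumption_effrate_derivatives:
  assumes "game_assumption R p a k"
  obtains F' F'' where "\<And>t. t \<in> {0<..<1} \<Longrightarrow>
      (effrate R p a k i j has_real_derivative F' t) (at t) \<and> F' t < 0 \<and>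
      (F' has_real_derivative F'' t) (at t) \<and> F'' t < 0"
  using assms unfolding game_assumption_def by blast

lemma omega_root:
  assumes GA: "game_assumption R p a k"
  shows "0 < omega R p a k i j" "omega R p a k i j < 1"
    "effrate R p a k i j (omega R p a k i j) = 0"
proof -
  let ?F = "effrate R p a k i j"
  obtain F' F'' where D: "\<And>t. t \<in> {0<..<1} \<Longrightarrow>
      (?F has_real_derivative F' t) (at t) \<and> F' t < 0 \<and> (F' has_real_derivative F'' t) (at t) \<and> F'' t < 0"
    using game_assumption_effrate_derivatives[OF GA] by blast
  have "continuous_on {0..1} ?F" and "R j 0 > 1" and "p j 0 = 0" and "p j 1 = 1" and "0 < k i"
    using GA unfolding game_assumption_def by auto
  then have cont: "continuous_on {0..1} ?F" and F0: "?F 0 > 0" and F1: "?F 1 < 0"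
    by (simp_all add: effrate_def)
  obtain w where "0 \<le> w" "w \<le> 1" "?F w = 0"
    using IVT2'[of ?F 1 0 0] cont F0 F1 by force
  with F0 F1 have w: "w \<in> {0<..<1}" "?F w = 0"
    by (auto simp: less_le)
  have "inj_on ?F {0<..<1}"
    by (rule DERIV_neg_imp_inj_on) (use D in auto)
  with w have "omega R p a k i j = w"
    unfolding omega_def by (intro the_equality) (auto simp: inj_on_def)
  with w show "0 < omega R p a k i j" "omega R p a k i j < 1"
    "effrate R p a k i j (omega R p a k i j) = 0"
    by auto
qed

lemma utility_update_coordinate_le_iff:
  "utility R p a k i (\<chi> j'. if j' = j then u else y$j') x \<le>
     utility R p a k i (\<chi> j'. if j' = j then v else y$j') x \<longleftrightarrow>
   u powr a i * effrate R p a k i j (u + total_except x i j) \<le>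
     v powr a i * effrate R p a k i j (v + total_except x i j)"
  unfolding utility_def by (simp add: sum.remove[of UNIV j])

lemma policy_update_coordinate:
  assumes y: "y \<in> policy R p a k i x"
    and u: "0 < u" "u \<le> omega R p a k i j - total_except x i j"
    and sum: "(\<Sum>j'\<in>UNIV. y$j') - y$j + u \<le> 1"
  shows "(\<chi> j'. if j' = j then u else y$j') \<in> policy R p a k i x"
proof -
  let ?z = "\<chi> j'. if j' = j then u else y$j'"
  have y_nonneg: "0 \<le> y$j'" for j'
    using y by (auto simp: policy_def simplexC_def)
  have z_nonneg: "0 \<le> ?z$j'" for j'
    using u y_nonneg by simp
  have "(\<Sum>j'\<in>UNIV. ?z$j') = u + (\<Sum>j'\<in>UNIV - {j}. y$j')"
    by (simp add: sum.remove[of UNIV j])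
  moreover have "(\<Sum>j'\<in>UNIV. y$j') = y$j + (\<Sum>j'\<in>UNIV - {j}. y$j')"
    by (simp add: sum.remove[of UNIV j])
  ultimately have z_sum: "(\<Sum>j'\<in>UNIV. ?z$j') \<le> 1"
    using sum by simp
  have "?z$j' \<le> (\<Sum>j'\<in>UNIV. ?z$j')" for j'
    using z_nonneg by (intro member_le_sum) auto
  with z_sum have "?z \<in> simplexC"
    unfolding simplexC_def using z_nonneg by (blast intro: order_trans)
  moreover have "j \<in> active R p a k i x"
    using u by (simp add: active_def)
  ultimately show ?thesis
    using y u unfolding policy_def by auto
qed

text \<open>The derivative of \<open>u \<mapsto> u powr c * F (u + s)\<close> is
  \<open>u powr (c - 1) * (c * F (u + s) + u * F' (u + s))\<close>.\<close>
definition first_order_set ::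
  "real \<Rightarrow> (real \<Rightarrow> real) \<Rightarrow> (real \<Rightarrow> real) \<Rightarrow> 'n::finite \<Rightarrow> 'm::finite \<Rightarrow> (real^'m^'n) set" where
  "first_order_set c F F' i j = {x. 0 < total x j \<and> total x j < 1 \<and>
     c * F (total x j) + x$i$j * F' (total x j) = 0}"

lemma GNE_coordinate_local_max:
  assumes x: "x \<in> GNE R p a k" and pos: "0 < x$i$j"
    and below: "x$i$j < omega R p a k i j - total_except x i j"
    and row: "(\<Sum>j'\<in>UNIV. x$i$j') < 1"
  obtains d where "0 < d" and "\<And>v. \<bar>x$i$j - v\<bar> < d \<Longrightarrow>
      v powr a i * effrate R p a k i j (v + total_except x i j) \<le>
      x$i$j powr a i * effrate R p a k i j (x$i$j + total_except x i j)"
proof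
  let ?P = "policy R p a k i x" and ?U = "utility R p a k i"
  define d where "d = min (x$i$j)
    (min (omega R p a k i j - total_except x i j - x$i$j) (1 - (\<Sum>j'\<in>UNIV. x$i$j')))"
  show "0 < d"
    unfolding d_def using pos below row by simp
  have pol: "x$i \<in> ?P" and opt: "\<And>y. y \<in> ?P \<Longrightarrow> ?U y x \<le> ?U (x$i) x"
    using x unfolding GNE_def by auto
  have x_i: "(\<chi> j'. if j' = j then x$i$j else x$i$j') = x$i"
    by (simp add: vec_eq_iff)
  fix v assume "\<bar>x$i$j - v\<bar> < d"
  then have "(\<chi> j'. if j' = j then v else x$i$j') \<in> ?P"
    by (intro policy_update_coordinate[OF pol]) (auto simp: d_def)
  then have "?U (\<chi> j'. if j' = j then v else x$i$j') x \<le> ?U (\<chi> j'. if j' = j then x$i$j else x$i$j') x"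
    unfolding x_i by (rule opt)
  then show "v powr a i * effrate R p a k i j (v + total_except x i j) \<le>
      x$i$j powr a i * effrate R p a k i j (x$i$j + total_except x i j)"
    by (simp only: utility_update_coordinate_le_iff)
qed

lemma GNE_first_order_condition:
  assumes GA: "game_assumption R p a k" and x: "x \<in> GNE R p a k"
    and D: "\<And>t. t \<in> {0<..<1} \<Longrightarrow> (effrate R p a k i j has_real_derivative F' t) (at t)"
    and pos: "0 < x$i$j" and not_omega: "total x j \<noteq> omega R p a k i j"
    and not_one: "(\<Sum>j'\<in>UNIV. x$i$j') \<noteq> 1"
  shows "x \<in> first_order_set (a i) (effrate R p a k i j) F' i j"
proof -
  let ?s = "total_except x i j" and ?w = "omega R p a k i j"
  let ?F = "effrate R p a k i j" and ?P = "policy R p a k i x"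
  have pol: "x$i \<in> ?P" and "x \<in> profiles"
    using x unfolding GNE_def by auto
  then have s_nonneg: "0 \<le> ?s" and "(\<Sum>j'\<in>UNIV. x$i$j') \<le> 1"
    unfolding profiles_def simplexC_def total_except_def by (auto intro: sum_nonneg)
  with not_one have row: "(\<Sum>j'\<in>UNIV. x$i$j') < 1"
    by simp
  have "j \<in> active R p a k i x"
    using pol pos unfolding policy_def by force
  with pol have "x$i$j \<le> ?w - ?s"
    unfolding policy_def by auto
  with not_omega have below: "x$i$j < ?w - ?s"
    by (simp add: total_eq_add_total_except[of x j i])
  obtain d where d: "0 < d" and max: "\<And>v. \<bar>x$i$j - v\<bar> < d \<Longrightarrow>
      v powr a i * ?F (v + ?s) \<le> x$i$j powr a i * ?F (x$i$j + ?s)"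
    using GNE_coordinate_local_max[OF x pos below row] by blast
  have T: "total x j \<in> {0<..<1}"
    using pos s_nonneg below omega_root[OF GA, of i j] total_eq_add_total_except[of x j i] by auto
  then have "(?F has_real_derivative F' (x$i$j + ?s)) (at (x$i$j + ?s))"
    using D by (simp only: total_eq_add_total_except[of x j i])
  from local_max_powr_mult_imp_first_order[OF pos d max this]
  have "a i * ?F (x$i$j + ?s) + x$i$j * F' (x$i$j + ?s) = 0" .
  with T show ?thesis
    unfolding first_order_set_def by (simp add: total_eq_add_total_except[of x j i])
qed

lemma GNE_subset:
  assumes GA: "game_assumption R p a k"
    and D: "\<And>t. t \<in> {0<..<1} \<Longrightarrow> (effrate R p a k i j has_real_derivative F' t) (at t)"
  shows "GNE R p a k \<subseteq> {x. x$i$j = 0} \<union> {x. total x j = omega R p a k i j} \<union>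
    {x. (\<Sum>j'\<in>UNIV. x$i$j') = 1} \<union> first_order_set (a i) (effrate R p a k i j) F' i j"
proof
  fix x assume x: "x \<in> GNE R p a k"
  then have "0 \<le> x$i$j"
    unfolding GNE_def profiles_def simplexC_def by auto
  with GNE_first_order_condition[OF GA x D] show "x \<in> {x. x$i$j = 0} \<union> {x. total x j = omega R p a k i j} \<union>
    {x. (\<Sum>j'\<in>UNIV. x$i$j') = 1} \<union> first_order_set (a i) (effrate R p a k i j) F' i j"
    by force
qed

lemma negligible_first_order_set_two_players:
  fixes F F' F'' :: "real \<Rightarrow> real" and i l :: "'n::finite" and j :: "'m::finite"
  assumes "i \<noteq> l"
    and D: "\<And>t. t \<in> {0<..<1} \<Longrightarrow> (F has_real_derivative F' t) (at t) \<and> F' t \<noteq> 0 \<and>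
      (F' has_real_derivative F'' t) (at t)"
  shows "negligible (first_order_set c F F' i j :: (real^'m^'n) set)"
proof -
  define \<phi> where "\<phi> t = - c * F t / F' t" for t
  have \<phi>_diff: "\<phi> differentiable (at t)" if "t \<in> {0<..<1}" for t
    unfolding \<phi>_def using D[OF that]
    by (auto intro!: derivative_eq_intros differentiableI[OF has_field_derivative_imp_has_derivative])
  define E :: "real^'m^'n" where "E = axis i (axis j 1) - axis l (axis j 1)"
  have E_entries: "E$i$j = 1" "total E j = 0"
    using assms(1) by (simp add: E_def axis_def, simp add: E_def total_eq_inner inner_diff_right inner_axis)
  define f where "f z = z + \<phi> (total z j) *\<^sub>R E" for z :: "real^'m^'n"
  define S where "S = {z::real^'m^'n. z$i$j = 0 \<and> total z j \<in> {0<..<1}}"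
  have "negligible S"
    by (rule negligible_subset[OF negligible_entry_level_set[of i j 0]]) (auto simp: S_def)
  moreover have "f differentiable_on S"
  proof (intro differentiable_at_imp_differentiable_on)
    fix z assume "z \<in> S"
    then have "\<phi> differentiable (at (total z j))"
      by (intro \<phi>_diff) (simp add: S_def)
    moreover have "(\<lambda>z. total z j) differentiable (at z)"
      unfolding total_eq_inner by (intro differentiable_inner differentiable_const differentiable_ident)
    ultimately have "(\<lambda>z. \<phi> (total z j)) differentiable (at z)"
      by (rule differentiable_compose)
    then show "f differentiable (at z)"
      unfolding f_def by (intro differentiable_add differentiable_ident differentiable_scaleR
        differentiable_const)
  qed
  ultimately have "negligible (f ` S)"
    by (rule negligible_differentiable_image_negligible[OF order_refl])
  moreover have "first_order_set c F F' i j \<subseteq> f ` S"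
  proof
    fix x assume "x \<in> first_order_set c F F' i j"
    then have T: "total x j \<in> {0<..<1}" and foc: "c * F (total x j) + x$i$j * F' (total x j) = 0"
      unfolding first_order_set_def by auto
    have "\<phi> (total x j) = x$i$j"
      using foc D[OF T] unfolding \<phi>_def by (simp add: field_simps)
    moreover define z where "z = x - x$i$j *\<^sub>R E"
    ultimately have "z \<in> S" "f z = x"
      using T E_entries unfolding S_def f_def z_def
      by (simp_all add: total_eq_inner inner_diff_right)
    then show "x \<in> f ` S"
      by (metis image_eqI)
  qed
  ultimately show ?thesis
    by (rule negligible_subset)
qed

lemma negligible_first_order_set_one_player:
  fixes F F' F'' :: "real \<Rightarrow> real" and i :: "'n::finite" and j :: "'m::finite"
  assumes one: "(UNIV :: 'n set) = {i}" and c: "0 < c"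
    and D: "\<And>t. t \<in> {0<..<1} \<Longrightarrow> (F has_real_derivative F' t) (at t) \<and> F' t < 0 \<and>
      (F' has_real_derivative F'' t) (at t) \<and> F'' t < 0"
  shows "negligible (first_order_set c F F' i j :: (real^'m^'n) set)"
proof -
  define K where "K t = c * F t + t * F' t" for t
  have "inj_on K {0<..<1}"
  proof (rule DERIV_neg_imp_inj_on)
    fix t :: real assume "0 < t" "t < 1"
    with D have F': "(F has_real_derivative F' t) (at t)" "F' t < 0"
      and F'': "(F' has_real_derivative F'' t) (at t)" "F'' t < 0"
      by auto
    have "(K has_real_derivative c * F' t + (1 * F' t + F'' t * t)) (at t)"
      unfolding K_def[abs_def] by (intro DERIV_add DERIV_cmult DERIV_mult DERIV_ident F' F'')
    moreover have "c * F' t + (1 * F' t + F'' t * t) < 0"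
      using c \<open>0 < t\<close> F'(2) F''(2) by (simp add: add_neg_neg mult_pos_neg mult_neg_pos)
    ultimately show "\<exists>y. (K has_real_derivative y) (at t) \<and> y < 0"
      by blast
  qed
  obtain t0 where t0: "{t \<in> {0<..<1}. K t = 0} \<subseteq> {t0}"
  proof (cases "\<exists>t0 \<in> {0<..<1}. K t0 = 0")
    case True
    then obtain t0 where "t0 \<in> {0<..<1}" "K t0 = 0"
      by blast
    with \<open>inj_on K {0<..<1}\<close> have "{t \<in> {0<..<1}. K t = 0} \<subseteq> {t0}"
      by (auto simp: inj_on_def)
    then show ?thesis
      by (rule that)
  qed (rule that, auto)
  have "total x j = x$i$j" for x :: "real^'m^'n"
    unfolding total_def one by simp
  then have "first_order_set c F F' i j \<subseteq> {x::real^'m^'n. x$i$j = t0}"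
    using t0 unfolding first_order_set_def K_def by auto
  then show ?thesis
    by (rule negligible_subset[OF negligible_entry_level_set])
qed

lemma negligible_first_order_set:
  fixes F F' F'' :: "real \<Rightarrow> real" and i :: "'n::finite" and j :: "'m::finite"
  assumes "0 < c"
    and D: "\<And>t. t \<in> {0<..<1} \<Longrightarrow> (F has_real_derivative F' t) (at t) \<and> F' t < 0 \<and>
      (F' has_real_derivative F'' t) (at t) \<and> F'' t < 0"
  shows "negligible (first_order_set c F F' i j :: (real^'m^'n) set)"
proof (cases "\<exists>l. i \<noteq> l")
  case True
  then obtain l where "i \<noteq> l"
    by blast
  then show ?thesis
    by (rule negligible_first_order_set_two_players) (use D in force)
next
  case False
  then have "(UNIV :: 'n set) = {i}"
    by auto
  then show ?thesis
    using assms by (rule negligible_first_order_set_one_player)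
qed

theorem theorem4:
  fixes R p :: "'m::finite \<Rightarrow> real \<Rightarrow> real"
    and a k :: "'n::finite \<Rightarrow> real"
  assumes "game_assumption R p a k"
    and "CARD('m) \<le> CARD('n)"
  shows "(GNE R p a k :: (real^'m^'n) set) \<in> null_sets lebesgue"
proof -
  \<comment> \<open>Any single player and CPR suffice.\<close>
  fix i :: 'n and j :: 'm
  obtain F' F'' where D: "\<And>t. t \<in> {0<..<1} \<Longrightarrow>
      (effrate R p a k i j has_real_derivative F' t) (at t) \<and> F' t < 0 \<and>
      (F' has_real_derivative F'' t) (at t) \<and> F'' t < 0"
    using game_assumption_effrate_derivatives[OF assms(1)] by blast
  have "0 < a i"
    using assms(1) unfolding game_assumption_def by blast
  then have "negligible (first_order_set (a i) (effrate R p a k i j) F' i j :: (real^'m^'n) set)"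
    using D by (rule negligible_first_order_set)
  then have "negligible ({x::real^'m^'n. x$i$j = 0} \<union> {x. total x j = omega R p a k i j} \<union>
      {x. (\<Sum>j'\<in>UNIV. x$i$j') = 1} \<union> first_order_set (a i) (effrate R p a k i j) F' i j)"
    using negligible_entry_level_set negligible_total_level_set negligible_row_sum_level_set
    by (intro negligible_Un)
  moreover have "GNE R p a k \<subseteq> \<dots>"
    using D by (intro GNE_subset[OF assms(1)]) blast
  ultimately have "negligible (GNE R p a k :: (real^'m^'n) set)"
    by (rule negligible_subset)
  then show ?thesis
    by (simp add: negligible_iff_null_sets)
qed

end
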